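(* Let $T$ be a finite tree and let $M$ be a minimal dominating set of $T$ with $|M|=\Gamma(T)$. Then (i) $|a_1(M)|=|N_1(M)|$; (ii) for every $X\subseteq N_2(M)$, $|X|\le |N(X)\cap a_2(M)|$.
   Context: A dominating set of a graph $G=(V,E)$ is a set $S\subseteq V$ such that every vertex is in $S$ or adjacent to a vertex of $S$; it is minimal if no proper subset is dominating. $\Gamma(T)$ is the maximum size of a minimal dominating set of $T$. $N[u]=N(u)\cup\{u\}$; $N(X)=\bigcup_{x\in X}N(x)$. For a dominating set $S$: $a(S)=\{u\in S: S\setminus\{u\}\text{ is not dominating}\}$; $N_1(S)=\{u\in V\setminus S: |N[u]\cap S|=1\}$; $N_2(S)=\{u\in V\setminus S: |N[u]\cap S|\ge 2\}$; $a_1(S)=\{u\in a(S): N[u]\cap N_1(S)\ne\emptyset\}$; $a_2(S)=\{u\in a(S): N[u]\cap N_1(S)=\emptyset\}$. *)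

theory Defs
  imports Main
begin

definition simple_graph :: "'a set \<Rightarrow> ('a \<Rightarrow> 'a \<Rightarrow> bool) \<Rightarrow> bool" where
  "simple_graph V E \<longleftrightarrow> finite V \<and> (\<forall>u v. E u v \<longrightarrow> u \<in> V \<and> v \<in> V)
     \<and> (\<forall>u v. E u v \<longrightarrow> E v u) \<and> (\<forall>u. \<not> E u u)"

definition walk_list :: "'a set \<Rightarrow> ('a \<Rightarrow> 'a \<Rightarrow> bool) \<Rightarrow> 'a list \<Rightarrow> bool" where
  "walk_list V E xs \<longleftrightarrow> xs \<noteq> [] \<and> set xs \<subseteq> V
     \<and> (\<forall>i. Suc i < length xs \<longrightarrow> E (xs ! i) (xs ! Suc i))"

definition connected_graph :: "'a set \<Rightarrow> ('a \<Rightarrow> 'a \<Rightarrow> bool) \<Rightarrow> bool" where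
  "connected_graph V E \<longleftrightarrow>
     (\<forall>u\<in>V. \<forall>v\<in>V. \<exists>xs. walk_list V E xs \<and> hd xs = u \<and> last xs = v)"

definition is_cycle :: "'a set \<Rightarrow> ('a \<Rightarrow> 'a \<Rightarrow> bool) \<Rightarrow> 'a list \<Rightarrow> bool" where
  "is_cycle V E xs \<longleftrightarrow> length xs \<ge> 3 \<and> distinct xs \<and> walk_list V E xs \<and> E (last xs) (hd xs)"

definition is_tree :: "'a set \<Rightarrow> ('a \<Rightarrow> 'a \<Rightarrow> bool) \<Rightarrow> bool" where
  "is_tree V E \<longleftrightarrow> simple_graph V E \<and> V \<noteq> {} \<and> connected_graph V E
     \<and> \<not> (\<exists>xs. is_cycle V E xs)"

definition nbhd :: "'a set \<Rightarrow> ('a \<Rightarrow> 'a \<Rightarrow> bool) \<Rightarrow> 'a \<Rightarrow> 'a set" where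
  "nbhd V E u = {v \<in> V. E u v}"

definition cnbhd :: "'a set \<Rightarrow> ('a \<Rightarrow> 'a \<Rightarrow> bool) \<Rightarrow> 'a \<Rightarrow> 'a set" where
  "cnbhd V E u = insert u (nbhd V E u)"

definition nbhd_set :: "'a set \<Rightarrow> ('a \<Rightarrow> 'a \<Rightarrow> bool) \<Rightarrow> 'a set \<Rightarrow> 'a set" where
  "nbhd_set V E X = (\<Union>x\<in>X. nbhd V E x)"

definition dominating :: "'a set \<Rightarrow> ('a \<Rightarrow> 'a \<Rightarrow> bool) \<Rightarrow> 'a set \<Rightarrow> bool" where
  "dominating V E S \<longleftrightarrow> S \<subseteq> V \<and> (\<forall>v\<in>V. v \<in> S \<or> (\<exists>u\<in>S. E v u))"

definition minimal_dominating :: "'a set \<Rightarrow> ('a \<Rightarrow> 'a \<Rightarrow> bool) \<Rightarrow> 'a set \<Rightarrow> bool" where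
  "minimal_dominating V E S \<longleftrightarrow> dominating V E S \<and> (\<forall>S'. S' \<subset> S \<longrightarrow> \<not> dominating V E S')"

definition Gamma :: "'a set \<Rightarrow> ('a \<Rightarrow> 'a \<Rightarrow> bool) \<Rightarrow> nat" where
  "Gamma V E = Max {card S | S. minimal_dominating V E S}"

definition a_set :: "'a set \<Rightarrow> ('a \<Rightarrow> 'a \<Rightarrow> bool) \<Rightarrow> 'a set \<Rightarrow> 'a set" where
  "a_set V E S = {u \<in> S. \<not> dominating V E (S - {u})}"

definition N1 :: "'a set \<Rightarrow> ('a \<Rightarrow> 'a \<Rightarrow> bool) \<Rightarrow> 'a set \<Rightarrow> 'a set" where
  "N1 V E S = {u \<in> V - S. card (cnbhd V E u \<inter> S) = 1}"

definition N2 :: "'a set \<Rightarrow> ('a \<Rightarrow> 'a \<Rightarrow> bool) \<Rightarrow> 'a set \<Rightarrow> 'a set" where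
  "N2 V E S = {u \<in> V - S. card (cnbhd V E u \<inter> S) \<ge> 2}"

definition a1 :: "'a set \<Rightarrow> ('a \<Rightarrow> 'a \<Rightarrow> bool) \<Rightarrow> 'a set \<Rightarrow> 'a set" where
  "a1 V E S = {u \<in> a_set V E S. cnbhd V E u \<inter> N1 V E S \<noteq> {}}"

definition a2 :: "'a set \<Rightarrow> ('a \<Rightarrow> 'a \<Rightarrow> bool) \<Rightarrow> 'a set \<Rightarrow> 'a set" where
  "a2 V E S = {u \<in> a_set V E S. cnbhd V E u \<inter> N1 V E S = {}}"

end

theory Submission
  imports Defs
begin

text \<open>An acyclic graph is bipartite, so every vertex set \<open>U\<close> contains an independent set of
  size at least \<open>|U|/2\<close>. In a minimal dominating set \<open>M\<close> every vertex lies in \<open>a(M)\<close>, and a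
  vertex of \<open>a\<^sub>2(M)\<close> has no neighbour in \<open>M\<close> or \<open>N\<^sub>1(M)\<close>. Given \<open>X \<subseteq> N\<^sub>2(M)\<close>, let
  \<open>Y = N(X) \<inter> a\<^sub>2(M)\<close>: an independent half of \<open>a\<^sub>1(M) \<union> N\<^sub>1(M) \<union> X \<union> Y\<close> together with
  \<open>a\<^sub>2(M) - Y\<close> is independent, and a maximal independent set is minimal dominating, so its
  size is at most \<open>\<Gamma> = |M| = |a\<^sub>1(M)| + |a\<^sub>2(M)|\<close>. Counting gives
  \<open>|N\<^sub>1(M)| + |X| \<le> |a\<^sub>1(M)| + |Y|\<close>. Since every vertex of \<open>a\<^sub>1(M)\<close> is the unique
  \<open>M\<close>-neighbour of a vertex of \<open>N\<^sub>1(M)\<close>, also \<open>|a\<^sub>1(M)| \<le> |N\<^sub>1(M)|\<close>; taking \<open>X = {}\<close>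
  yields (i), and then (ii).\<close>

lemma simple_graphD:
  assumes "simple_graph V E"
  shows "finite V" and "E u v \<Longrightarrow> u \<in> V" and "E u v \<Longrightarrow> v \<in> V"
    and "E u v \<Longrightarrow> E v u" and "\<not> E u u"
  using assms unfolding simple_graph_def by blast+

definition independent_set :: "('a \<Rightarrow> 'a \<Rightarrow> bool) \<Rightarrow> 'a set \<Rightarrow> bool" where
  "independent_set E S \<longleftrightarrow> (\<forall>a\<in>S. \<forall>b\<in>S. \<not> E a b)"

lemma first_repetition:
  fixes w :: "nat \<Rightarrow> 'a"
  assumes "finite (range w)"
  obtains i j where "i < j" "w i = w j" "inj_on w {..<j}"
proof -
  have "\<not> inj w"
    using assms finite_imageD infinite_UNIV_nat by blast
  then have "\<exists>j. \<exists>i<j. w i = w j"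
    unfolding inj_def by (metis linorder_neqE_nat)
  then obtain j where j: "\<exists>i<j. w i = w j" and least: "\<And>m. m < j \<Longrightarrow> \<not> (\<exists>i<m. w i = w m)"
    unfolding exists_least_iff[of "\<lambda>j. \<exists>i<j. w i = w j"] by blast
  have "inj_on w {..<j}"
    by (rule inj_onI) (metis lessThan_iff least linorder_neqE_nat)
  with j that show thesis by blast
qed

lemma non_backtracking_walk_exists:
  assumes "w0 \<in> W" and branching: "\<And>v. v \<in> W \<Longrightarrow> \<exists>a\<in>W. \<exists>b\<in>W. E v a \<and> E v b \<and> a \<noteq> b"
  obtains w where "\<forall>n. E (w n) (w (Suc n))" and "\<forall>n. w (Suc (Suc n)) \<noteq> w n"
proof -
  define P where "P = (\<lambda>(_::nat) p::'a \<times> 'a. fst p \<in> W \<and> snd p \<in> W \<and> E (fst p) (snd p))"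
  define Q where "Q = (\<lambda>(_::nat) p q::'a \<times> 'a. fst q = snd p \<and> snd q \<noteq> fst p)"
  obtain w1 where "w1 \<in> W" "E w0 w1"
    using branching[OF \<open>w0 \<in> W\<close>] by blast
  with \<open>w0 \<in> W\<close> have start: "\<exists>p. P 0 p" unfolding P_def by force
  have extend: "\<exists>q. P (Suc n) q \<and> Q n p q" if "P n p" for n p
  proof -
    from that have "snd p \<in> W" by (simp add: P_def)
    then obtain a b where "a \<in> W" "b \<in> W" "E (snd p) a" "E (snd p) b" "a \<noteq> b"
      using branching by blast
    then obtain z where "z \<in> W" "E (snd p) z" "z \<noteq> fst p" by blast
    with \<open>snd p \<in> W\<close> have "P (Suc n) (snd p, z) \<and> Q n p (snd p, z)"
      by (simp add: P_def Q_def)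
    then show ?thesis by blast
  qed
  obtain f where f: "\<And>n. P n (f n) \<and> Q n (f n) (f (Suc n))"
    using dependent_nat_choice[of P Q, OF start extend] by blast
  show thesis
  proof (rule that[of "fst \<circ> f"])
    show "\<forall>n. E ((fst \<circ> f) n) ((fst \<circ> f) (Suc n))"
      using f by (simp add: P_def Q_def)
    show "\<forall>n. (fst \<circ> f) (Suc (Suc n)) \<noteq> (fst \<circ> f) n"
      using f by (simp add: Q_def)
  qed
qed

lemma non_backtracking_walk_cycle:
  assumes sg: "simple_graph V E"
    and walk: "\<And>n. E (w n) (w (Suc n))" and non_backtracking: "\<And>n. w (Suc (Suc n)) \<noteq> w n"
    and rep: "i < j" "w i = w j" "inj_on w {..<j}"
  shows "is_cycle V E (map w [i..<j])"
proof -
  have "j \<noteq> Suc i" using walk[of i] rep simple_graphD(5)[OF sg] by metis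
  moreover have "j \<noteq> Suc (Suc i)" using non_backtracking[of i] rep by metis
  ultimately have "length (map w [i..<j]) \<ge> 3" using \<open>i < j\<close> by simp
  moreover have "inj_on w {i..<j}"
    by (rule inj_on_subset[OF rep(3)]) auto
  then have "distinct (map w [i..<j])" by (simp add: distinct_map)
  moreover have "walk_list V E (map w [i..<j])"
    unfolding walk_list_def using \<open>i < j\<close> walk simple_graphD(2)[OF sg]
    by (auto simp: nth_Cons' simp del: upt_Suc)
  moreover have "E (last (map w [i..<j])) (hd (map w [i..<j]))"
    using walk[of "j - 1"] rep by (simp add: last_map hd_map)
  ultimately show ?thesis unfolding is_cycle_def by blast
qed

lemma acyclic_has_vertex_of_degree_le_1:
  assumes sg: "simple_graph V E" and acyclic: "\<nexists>xs. is_cycle V E xs"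
    and "W \<subseteq> V" "W \<noteq> {}"
  shows "\<exists>v\<in>W. card (nbhd V E v \<inter> W) \<le> 1"
proof (rule ccontr)
  assume no_leaf: "\<not> ?thesis"
  have branching: "\<exists>a\<in>W. \<exists>b\<in>W. E v a \<and> E v b \<and> a \<noteq> b" if "v \<in> W" for v
  proof -
    have "finite (nbhd V E v \<inter> W)"
      using simple_graphD(1)[OF sg] by (simp add: nbhd_def)
    moreover have "\<not> card (nbhd V E v \<inter> W) \<le> 1"
      using no_leaf that by blast
    ultimately obtain a b where "a \<in> nbhd V E v \<inter> W" "b \<in> nbhd V E v \<inter> W" "a \<noteq> b"
      by (metis One_nat_def card_le_Suc0_iff_eq)
    then show ?thesis by (auto simp: nbhd_def)
  qed
  obtain w0 where "w0 \<in> W" using \<open>W \<noteq> {}\<close> by blast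
  obtain w where walk: "\<forall>n. E (w n) (w (Suc n))"
    and non_backtracking: "\<forall>n. w (Suc (Suc n)) \<noteq> w n"
    using \<open>w0 \<in> W\<close> branching by (rule non_backtracking_walk_exists)
  have "range w \<subseteq> V" using walk simple_graphD(2)[OF sg] by blast
  then have "finite (range w)" using simple_graphD(1)[OF sg] finite_subset by blast
  then obtain i j where "i < j" "w i = w j" "inj_on w {..<j}"
    by (rule first_repetition)
  with sg walk[rule_format] non_backtracking[rule_format] have "is_cycle V E (map w [i..<j])"
    by (rule non_backtracking_walk_cycle)
  with acyclic show False by blast
qed

lemma acyclic_independent_subset_half:
  assumes sg: "simple_graph V E" and acyclic: "\<nexists>xs. is_cycle V E xs"
  shows "W \<subseteq> V \<Longrightarrow> \<exists>S\<subseteq>W. independent_set E S \<and> card W \<le> 2 * card S"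
proof (induction "card W" arbitrary: W rule: less_induct)
  case less
  have "finite W" using less.prems simple_graphD(1)[OF sg] finite_subset by blast
  show ?case
  proof (cases "W = {}")
    case True
    then show ?thesis by (simp add: independent_set_def)
  next
    case False
    then obtain v where "v \<in> W" and deg: "card (nbhd V E v \<inter> W) \<le> 1"
      using acyclic_has_vertex_of_degree_le_1[OF sg acyclic less.prems] by blast
    define C where "C = insert v (nbhd V E v \<inter> W)"
    have "C \<subseteq> W" "finite C" using \<open>v \<in> W\<close> \<open>finite W\<close> by (auto simp: C_def)
    have "card C \<le> 2" using deg card_insert_le_m1[of 2 "nbhd V E v \<inter> W" v] by (simp add: C_def)
    have card_W: "card W = card (W - C) + card C"
      using card_Diff_subset[OF \<open>finite C\<close> \<open>C \<subseteq> W\<close>] card_mono[OF \<open>finite W\<close> \<open>C \<subseteq> W\<close>] by simp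
    have "card (W - C) < card W"
      using \<open>finite W\<close> \<open>v \<in> W\<close> by (intro psubset_card_mono) (auto simp: C_def)
    then obtain S where S: "S \<subseteq> W - C" "independent_set E S" "card (W - C) \<le> 2 * card S"
      using less.hyps[of "W - C"] less.prems by blast
    have "finite S" using S(1) \<open>finite W\<close> finite_subset by blast
    have "\<not> E v s" if "s \<in> S" for s
      using that S(1) simple_graphD(3)[OF sg] by (auto simp: C_def nbhd_def)
    then have "independent_set E (insert v S)"
      using S(2) simple_graphD(4,5)[OF sg] unfolding independent_set_def by blast
    moreover have "card W \<le> 2 * card (insert v S)"
    proof -
      have "v \<notin> S" using S(1) by (auto simp: C_def)
      with \<open>finite S\<close> show ?thesis using card_W \<open>card C \<le> 2\<close> S(3) by simp
    qed
    moreover have "insert v S \<subseteq> W" using S(1) \<open>v \<in> W\<close> by blast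
    ultimately show ?thesis by (intro exI[of _ "insert v S"]) simp
  qed
qed

lemma card_minimal_dominating_le_Gamma:
  assumes "simple_graph V E" and "minimal_dominating V E S"
  shows "card S \<le> Gamma V E"
proof -
  have "{card S | S. minimal_dominating V E S} \<subseteq> card ` Pow V"
    unfolding minimal_dominating_def dominating_def by auto
  then have "finite {card S | S. minimal_dominating V E S}"
    using simple_graphD(1)[OF assms(1)] finite_subset by blast
  then show ?thesis unfolding Gamma_def using assms(2) by (auto intro: Max_ge)
qed

lemma maximal_independent_set_minimal_dominating:
  assumes sg: "simple_graph V E" and "T \<subseteq> V" and ind: "independent_set E T"
    and maximal: "\<And>v. v \<in> V - T \<Longrightarrow> \<not> independent_set E (insert v T)"
  shows "minimal_dominating V E T"
proof -
  have "dominating V E T"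
    unfolding dominating_def
  proof (intro conjI ballI \<open>T \<subseteq> V\<close>)
    fix v assume "v \<in> V"
    show "v \<in> T \<or> (\<exists>u\<in>T. E v u)"
      using maximal[of v] ind \<open>v \<in> V\<close> simple_graphD(4,5)[OF sg]
      unfolding independent_set_def by blast
  qed
  moreover have "\<not> dominating V E S'" if "S' \<subset> T" for S'
  proof -
    obtain t where "t \<in> T" "t \<notin> S'" using \<open>S' \<subset> T\<close> by blast
    then show ?thesis
      using ind \<open>T \<subseteq> V\<close> \<open>S' \<subset> T\<close> unfolding dominating_def independent_set_def by blast
  qed
  ultimately show ?thesis unfolding minimal_dominating_def by blast
qed

lemma card_independent_set_le_Gamma:
  assumes sg: "simple_graph V E" and "J \<subseteq> V" and "independent_set E J"
  shows "card J \<le> Gamma V E"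
proof -
  define C where "C = {T. J \<subseteq> T \<and> T \<subseteq> V \<and> independent_set E T}"
  have "finite C" unfolding C_def using simple_graphD(1)[OF sg] by (auto intro: finite_subset[of _ "Pow V"])
  moreover have "J \<in> C" using assms unfolding C_def by blast
  ultimately obtain T where "T \<in> C" "J \<subseteq> T" and T_max: "\<forall>B\<in>C. T \<subseteq> B \<longrightarrow> T = B"
    using finite_has_maximal2[of C J] by blast
  then have "T \<subseteq> V" "independent_set E T" unfolding C_def by auto
  have "\<not> independent_set E (insert v T)" if "v \<in> V - T" for v
    using T_max that \<open>J \<subseteq> T\<close> \<open>T \<subseteq> V\<close> unfolding C_def by blast
  with sg \<open>T \<subseteq> V\<close> \<open>independent_set E T\<close> have "minimal_dominating V E T"
    by (rule maximal_independent_set_minimal_dominating)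
  then have "card T \<le> Gamma V E" by (rule card_minimal_dominating_le_Gamma[OF sg])
  moreover have "card J \<le> card T"
    using \<open>J \<subseteq> T\<close> \<open>T \<subseteq> V\<close> simple_graphD(1)[OF sg] by (meson card_mono finite_subset)
  ultimately show ?thesis by simp
qed

lemma a_set_minimal_dominating: "minimal_dominating V E M \<Longrightarrow> a_set V E M = M"
  unfolding a_set_def minimal_dominating_def by blast

lemma a1_Un_a2: "a1 V E S \<union> a2 V E S = a_set V E S"
  unfolding a1_def a2_def by blast

lemma a1_Int_a2: "a1 V E S \<inter> a2 V E S = {}"
  unfolding a1_def a2_def by blast

lemma N1_Int_N2: "N1 V E S \<inter> N2 V E S = {}"
  unfolding N1_def N2_def by auto

lemma N1_subset: "N1 V E S \<subseteq> V - S" and N2_subset: "N2 V E S \<subseteq> V - S"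
  unfolding N1_def N2_def by auto

text \<open>A vertex of \<open>a\<^sub>2(S)\<close> has no private neighbour outside \<open>S\<close>, so it must be its own
  private neighbour.\<close>

lemma a2_no_neighbour_in_dominating_set:
  assumes sg: "simple_graph V E" and dom: "dominating V E S"
    and u: "u \<in> a2 V E S" and "w \<in> S"
  shows "\<not> E u w"
proof
  assume "E u w"
  from u have "u \<in> S" "\<not> dominating V E (S - {u})" and no_N1: "cnbhd V E u \<inter> N1 V E S = {}"
    unfolding a2_def a_set_def by auto
  then obtain v where v: "v \<in> V" "v \<notin> S - {u}" "\<forall>x\<in>S - {u}. \<not> E v x"
    using dom unfolding dominating_def by blast
  show False
  proof (cases "v = u")
    case True
    then show False using v \<open>E u w\<close> \<open>w \<in> S\<close> simple_graphD(5)[OF sg] by blast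
  next
    case False
    with v have "v \<notin> S" by blast
    with dom v have "E v u" unfolding dominating_def by blast
    with v \<open>v \<notin> S\<close> \<open>u \<in> S\<close> simple_graphD(3)[OF sg] have "cnbhd V E v \<inter> S = {u}"
      unfolding cnbhd_def nbhd_def by auto
    with v \<open>v \<notin> S\<close> have "v \<in> N1 V E S" unfolding N1_def by simp
    moreover have "v \<in> cnbhd V E u"
      using \<open>E v u\<close> v simple_graphD(4)[OF sg] unfolding cnbhd_def nbhd_def by blast
    ultimately show False using no_N1 by blast
  qed
qed

lemma card_a1_le_card_N1:
  assumes sg: "simple_graph V E"
  shows "card (a1 V E S) \<le> card (N1 V E S)"
proof (rule surj_card_le)
  show "finite (N1 V E S)"
    by (rule finite_subset[OF N1_subset]) (simp add: simple_graphD(1)[OF sg])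
  show "a1 V E S \<subseteq> (\<lambda>p. the_elem (cnbhd V E p \<inter> S)) ` N1 V E S"
  proof
    fix u assume "u \<in> a1 V E S"
    then obtain p where "u \<in> S" "p \<in> cnbhd V E u" "p \<in> N1 V E S"
      unfolding a1_def a_set_def by blast
    then have "p \<notin> S" "card (cnbhd V E p \<inter> S) = 1" unfolding N1_def by simp_all
    then obtain x where x: "cnbhd V E p \<inter> S = {x}" by (elim card_1_singletonE)
    have "E u p"
      using \<open>p \<in> cnbhd V E u\<close> \<open>p \<notin> S\<close> \<open>u \<in> S\<close> unfolding cnbhd_def nbhd_def by auto
    then have "u \<in> V" "E p u" using simple_graphD(2,4)[OF sg] by blast+
    with \<open>u \<in> S\<close> have "u \<in> cnbhd V E p \<inter> S" unfolding cnbhd_def nbhd_def by blast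
    with x have "u = the_elem (cnbhd V E p \<inter> S)" by simp
    with \<open>p \<in> N1 V E S\<close> show "u \<in> (\<lambda>p. the_elem (cnbhd V E p \<inter> S)) ` N1 V E S" by blast
  qed
qed

lemma a2_outside_nbhd_set_not_adjacent:
  assumes sg: "simple_graph V E" and dom: "dominating V E S"
    and u: "u \<in> a2 V E S" "u \<notin> nbhd_set V E X" and v: "v \<in> S \<union> N1 V E S \<union> X"
  shows "\<not> E u v"
proof
  assume "E u v"
  consider "v \<in> S" | "v \<in> N1 V E S" | "v \<in> X" using v by blast
  then show False
  proof cases
    case 1
    then show False using a2_no_neighbour_in_dominating_set[OF sg dom u(1)] \<open>E u v\<close> by blast
  next
    case 2
    have "v \<in> cnbhd V E u"
      using \<open>E u v\<close> simple_graphD(3)[OF sg] unfolding cnbhd_def nbhd_def by blast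
    with 2 u(1) show False unfolding a2_def by blast
  next
    case 3
    have "u \<in> nbhd V E v"
      using \<open>E u v\<close> simple_graphD(2,4)[OF sg] unfolding nbhd_def by blast
    with 3 u(2) show False unfolding nbhd_set_def by blast
  qed
qed

lemma card_N1_add_card_le:
  assumes sg: "simple_graph V E" and acyclic: "\<nexists>xs. is_cycle V E xs"
    and md: "minimal_dominating V E M" and max: "card M = Gamma V E"
    and X: "X \<subseteq> N2 V E M"
  shows "card (N1 V E M) + card X \<le> card (a1 V E M) + card (nbhd_set V E X \<inter> a2 V E M)"
proof -
  define A P I where "A = a1 V E M" and "P = N1 V E M" and "I = a2 V E M"
  define Y where "Y = nbhd_set V E X \<inter> I"
  define U where "U = A \<union> P \<union> X \<union> Y"
  have dom: "dominating V E M" using md unfolding minimal_dominating_def by blast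
  have "M \<subseteq> V" "finite V" using dom simple_graphD(1)[OF sg] unfolding dominating_def by blast+
  have M_split: "M = A \<union> I" "A \<inter> I = {}"
    unfolding A_def I_def a1_Un_a2 a1_Int_a2 a_set_minimal_dominating[OF md] by simp_all
  have "P \<subseteq> V - M" unfolding P_def by (rule N1_subset)
  have "X \<subseteq> V - M" using X N2_subset by (rule subset_trans)
  have "P \<inter> X = {}" using X N1_Int_N2[of V E M] unfolding P_def by blast
  have "Y \<subseteq> I" unfolding Y_def by (rule Int_lower2)
  have "U \<subseteq> V" "U \<inter> (I - Y) = {}"
    using M_split \<open>M \<subseteq> V\<close> \<open>P \<subseteq> V - M\<close> \<open>X \<subseteq> V - M\<close> \<open>Y \<subseteq> I\<close>
    unfolding U_def by blast+
  have fin: "finite A" "finite P" "finite X" "finite I" "finite Y" "finite U"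
    using \<open>U \<subseteq> V\<close> \<open>finite V\<close> \<open>Y \<subseteq> I\<close> M_split \<open>M \<subseteq> V\<close>
    unfolding U_def by (meson finite_subset le_sup_iff)+
  obtain S where S: "S \<subseteq> U" "independent_set E S" "card U \<le> 2 * card S"
    using acyclic_independent_subset_half[OF sg acyclic \<open>U \<subseteq> V\<close>] by blast
  have I_Y_separated: "\<not> E a b" if "a \<in> I - Y" "b \<in> M \<union> P \<union> X" for a b
    using a2_outside_nbhd_set_not_adjacent[OF sg dom, of a X b] that
    unfolding I_def P_def Y_def by blast
  have "U \<subseteq> M \<union> P \<union> X" "I \<subseteq> M"
    using M_split \<open>Y \<subseteq> I\<close> unfolding U_def by blast+
  have "independent_set E ((I - Y) \<union> S)"
    unfolding independent_set_def
  proof (intro ballI)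
    fix a b assume "a \<in> (I - Y) \<union> S" "b \<in> (I - Y) \<union> S"
    then consider "a \<in> I - Y" "b \<in> M \<union> P \<union> X" | "b \<in> I - Y" "a \<in> M \<union> P \<union> X" | "a \<in> S" "b \<in> S"
      using S(1) \<open>U \<subseteq> M \<union> P \<union> X\<close> \<open>I \<subseteq> M\<close> by blast
    then show "\<not> E a b"
    proof cases
      case 1
      then show ?thesis by (rule I_Y_separated)
    next
      case 2
      then show ?thesis using I_Y_separated simple_graphD(4)[OF sg] by blast
    next
      case 3
      then show ?thesis using S(2) unfolding independent_set_def by blast
    qed
  qed
  moreover have "(I - Y) \<union> S \<subseteq> V"
    using \<open>I \<subseteq> M\<close> \<open>M \<subseteq> V\<close> S(1) \<open>U \<subseteq> V\<close> by blast
  ultimately have "card ((I - Y) \<union> S) \<le> card M"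
    using card_independent_set_le_Gamma[OF sg] max by simp
  moreover have "card ((I - Y) \<union> S) = card I - card Y + card S"
    using \<open>U \<inter> (I - Y) = {}\<close> S(1) fin \<open>Y \<subseteq> I\<close>
    by (subst card_Un_disjoint) (auto intro: finite_subset simp: card_Diff_subset)
  moreover have "card M = card A + card I"
    using M_split fin by (simp add: card_Un_disjoint)
  moreover have "card U = card A + card P + card X + card Y"
  proof -
    have "A \<inter> P = {}" "(A \<union> P) \<inter> X = {}" "(A \<union> P \<union> X) \<inter> Y = {}"
      using M_split \<open>P \<subseteq> V - M\<close> \<open>X \<subseteq> V - M\<close> \<open>P \<inter> X = {}\<close> \<open>Y \<subseteq> I\<close> by blast+
    then show ?thesis using fin unfolding U_def by (simp add: card_Un_disjoint)
  qed
  moreover have "card Y \<le> card I" using fin \<open>Y \<subseteq> I\<close> by (simp add: card_mono)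
  ultimately show ?thesis using S(3) unfolding A_def P_def I_def Y_def by linarith
qed

theorem theorem4p7:
  fixes V :: "'a set" and E :: "'a \<Rightarrow> 'a \<Rightarrow> bool" and M :: "'a set"
  assumes "is_tree V E"
    and "minimal_dominating V E M"
    and "card M = Gamma V E"
  shows "card (a1 V E M) = card (N1 V E M)
         \<and> (\<forall>X. X \<subseteq> N2 V E M \<longrightarrow> card X \<le> card (nbhd_set V E X \<inter> a2 V E M))"
proof -
  have sg: "simple_graph V E" and acyclic: "\<nexists>xs. is_cycle V E xs"
    using assms(1) unfolding is_tree_def by blast+
  note key = card_N1_add_card_le[OF sg acyclic assms(2,3)]
  have "card (N1 V E M) \<le> card (a1 V E M)"
    using key[of "{}"] by (simp add: nbhd_set_def)
  with card_a1_le_card_N1[OF sg, of M] have "card (a1 V E M) = card (N1 V E M)" by simp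
  moreover have "card X \<le> card (nbhd_set V E X \<inter> a2 V E M)" if "X \<subseteq> N2 V E M" for X
    using key[OF that] card_a1_le_card_N1[OF sg, of M] by linarith
  ultimately show ?thesis by blast
qed

end
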